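(* Let $\mathcal{A}_I$ be an IOTS and $\mathcal{A}_S$ an LTS over the same action set $\mathit{Act}=L_I\sqcup L_O$. Then for every $M\in\mathbb{R}_{>0}$: $$\mathcal{A}_I\ \mathbf{ioco}\ \mathcal{A}_S \iff \chi^M(\mathcal{A}_I)\ \mathbf{tioco}_M\ \chi^M(\mathcal{A}_S).$$
   Context: An LTS is $\mathcal{A}=\langle S,\mathit{Act},\rightarrow,s_0\rangle$ with $S$ finite, $s_0\in S$, $\mathit{Act}=L_I\sqcup L_O$ finite, $\rightarrow\subseteq S\times\mathit{Act}\times S$ (no internal actions). An IOTS is an LTS in which every state has an outgoing transition on every input. A state is quiescent iff it has no outgoing output transition. Let $\delta$ be a fresh symbol, $\mathit{Act}^\delta=\mathit{Act}\cup\{\delta\}$. Define $s\ \mathbf{after}\ \varepsilon=\{s\}$; $s\ \mathbf{after}\ a=\{s' : a\in\mathit{Act},\ s\xrightarrow{a}s'\}\cup\{s : a=\delta,\ s\text{ quiescent}\}$; $s\ \mathbf{after}\ a\sigma=\bigcup\{s'\ \mathbf{after}\ \sigma : s'\in s\ \mathbf{after}\ a\}$; $\mathcal{A}\ \mathbf{after}\ \sigma=s_0\ \mathbf{after}\ \sigma$. $\mathbf{out}(s)=\{o\in L_O: s\xrightarrow{o}\}\cup\{\delta : s\text{ quiescent}\}$, extended to sets by union. $\mathit{Straces}(\mathcal{A})=\{\sigma\in(\mathit{Act}^\delta)^*:\mathcal{A}\ \mathbf{after}\ \sigma\neq\emptyset\}$. Then $\mathcal{A}_I\ \mathbf{ioco}\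 \mathcal{A}_S$ iff for all $\sigma\in\mathit{Straces}(\mathcal{A}_S)$: $\mathbf{out}(\mathcal{A}_I\ \mathbf{after}\ \sigma)\subseteq\mathbf{out}(\mathcal{A}_S\ \mathbf{after}\ \sigma)$. TA-ification: for $M>0$, $\chi^M(\mathcal{A})$ is the timed automaton with locations $S$, initial location $s_0$, labels $\mathit{Act}^\delta$ (inputs $L_I$, outputs $L_O$), single clock $c$, invariant $c\le M$ on every location, transitions $(\ell,a,c<M,\{c\},\ell')$ for each $(\ell,a,\ell')\in\rightarrow$ and $(\ell,\delta,c=M,\{c\},\ell)$ for each quiescent $\ell$. Every transition resets $c$, so $c=0$ upon entering a location; $\ell\xrightarrow{(d,a)}\ell'$ ($d\in\mathbb{R}_{\ge0}$) iff there is a transition $(\ell,a,\phi,\{c\},\ell')$ such that $c=d$ satisfies $\phi$ and the invariant of $\ell$. Timed notions for parameter $M$: a location $\ell$ is quiescent iff there are no $d<M$, $o\in L_O$ with $\ell\xrightarrow{(d,o)}$. $\mathbf{out}_M(\ell)=\{(d,o)\in\mathbb{R}_{\ge0}\times L_O:\ell\xrightarrow{(d,o)}\}\cup\{(M,\delta):\ell\text{ quiescent}\}$, extended to sets by union. $\ell\ \mathbf{after}_M\ \epsilon=\{\ell\}$, $\ell\ \mathbf{after}_M\ (d,a)=\{\ell':\ell\xrightarrow{(d,a)}\ell'\}\cup\{\ell:(d,a)=(M,\delta),\ \ell\text{ quiescent}\}$, $\ell\ \mathbf{after}_M\ (d,a)\rho=\bigcup\{\ell'\ \mathbf{after}_M\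 \rho:\ell'\in\ell\ \mathbf{after}_M\ (d,a)\}$; $\mathscr{A}\ \mathbf{after}_M\ \rho=\ell_0\ \mathbf{after}_M\ \rho$; $\mathit{Sttraces}_M(\mathscr{A})=\{\rho\in(\mathbb{R}_{\ge0}\times\mathit{Act}^\delta)^*:\mathscr{A}\ \mathbf{after}_M\ \rho\neq\emptyset\}$. An IOTA is a TA in which every location $\ell$ satisfies $\ell\xrightarrow{(d,i)}$ for all $i\in L_I$ and all $d<M$. For an IOTA $\mathscr{A}_I$ and TA $\mathscr{A}_S$: $\mathscr{A}_I\ \mathbf{tioco}_M\ \mathscr{A}_S$ iff for all $\rho\in\mathit{Sttraces}_M(\mathscr{A}_S)$: $\mathbf{out}_M(\mathscr{A}_I\ \mathbf{after}_M\ \rho)\subseteq\mathbf{out}_M(\mathscr{A}_S\ \mathbf{after}_M\ \rho)$. *)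

theory Defs
  imports Main Complex_Main
begin

text \<open>Actions of type 'a; the quiescence label delta is None, an action a is Some a.
  So Act^delta is represented by 'a option.\<close>

record ('s, 'a) lts =
  states :: "'s set"
  inputs :: "'a set"
  outputs :: "'a set"
  trans :: "('s \<times> 'a \<times> 's) set"
  init :: 's

definition is_lts :: "('s, 'a) lts \<Rightarrow> bool" where
  "is_lts A \<longleftrightarrow> finite (states A) \<and> init A \<in> states A
     \<and> finite (inputs A) \<and> finite (outputs A) \<and> inputs A \<inter> outputs A = {}
     \<and> trans A \<subseteq> states A \<times> (inputs A \<union> outputs A) \<times> states A"

definition is_iots :: "('s, 'a) lts \<Rightarrow> bool" where
  "is_iots A \<longleftrightarrow> is_lts A \<and>
     (\<forall>s\<in>states A. \<forall>i\<in>inputs A. \<exists>s'. (s, i, s') \<in> trans A)"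

definition quiescent :: "('s, 'a) lts \<Rightarrow> 's \<Rightarrow> bool" where
  "quiescent A s \<longleftrightarrow> \<not> (\<exists>o' s'. o' \<in> outputs A \<and> (s, o', s') \<in> trans A)"

definition act_delta :: "('s, 'a) lts \<Rightarrow> 'a option set" where
  "act_delta A = Some ` (inputs A \<union> outputs A) \<union> {None}"

definition after1 :: "('s, 'a) lts \<Rightarrow> 's \<Rightarrow> 'a option \<Rightarrow> 's set" where
  "after1 A s x = (case x of
      Some a \<Rightarrow> (if a \<in> inputs A \<union> outputs A then {s'. (s, a, s') \<in> trans A} else {})
    | None \<Rightarrow> (if quiescent A s then {s} else {}))"

fun after_s :: "('s, 'a) lts \<Rightarrow> 's \<Rightarrow> 'a option list \<Rightarrow> 's set" where
  "after_s A s [] = {s}"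
| "after_s A s (x # \<sigma>) = (\<Union>s'\<in>after1 A s x. after_s A s' \<sigma>)"

definition after :: "('s, 'a) lts \<Rightarrow> 'a option list \<Rightarrow> 's set" where
  "after A \<sigma> = after_s A (init A) \<sigma>"

definition out :: "('s, 'a) lts \<Rightarrow> 's \<Rightarrow> 'a option set" where
  "out A s = {Some o' | o'. o' \<in> outputs A \<and> (\<exists>s'. (s, o', s') \<in> trans A)}
             \<union> (if quiescent A s then {None} else {})"

definition out_set :: "('s, 'a) lts \<Rightarrow> 's set \<Rightarrow> 'a option set" where
  "out_set A P = (\<Union>s\<in>P. out A s)"

definition straces :: "('s, 'a) lts \<Rightarrow> 'a option list set" where
  "straces A = {\<sigma>. set \<sigma> \<subseteq> act_delta A \<and> after A \<sigma> \<noteq> {}}"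

definition ioco :: "('s1, 'a) lts \<Rightarrow> ('s2, 'a) lts \<Rightarrow> bool" where
  "ioco AI AS \<longleftrightarrow> (\<forall>\<sigma>\<in>straces AS. out_set AI (after AI \<sigma>) \<subseteq> out_set AS (after AS \<sigma>))"

datatype clock_constraint = CLt real | CEq real | CLe real

fun sat :: "clock_constraint \<Rightarrow> real \<Rightarrow> bool" where
  "sat (CLt m) c \<longleftrightarrow> c < m"
| "sat (CEq m) c \<longleftrightarrow> c = m"
| "sat (CLe m) c \<longleftrightarrow> c \<le> m"

text \<open>Edges (l, a, guard, l'); every edge resets the single clock c.\<close>
record ('l, 'a) ta =
  locs :: "'l set"
  tinit :: 'l
  tinputs :: "'a set"
  toutputs :: "'a set"
  invar :: "'l \<Rightarrow> clock_constraint"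
  edges :: "('l \<times> 'a option \<times> clock_constraint \<times> 'l) set"

definition tstep :: "('l, 'a) ta \<Rightarrow> 'l \<Rightarrow> real \<Rightarrow> 'a option \<Rightarrow> 'l \<Rightarrow> bool" where
  "tstep T l d a l' \<longleftrightarrow> (\<exists>g. (l, a, g, l') \<in> edges T \<and> sat g d \<and> sat (invar T l) d)"

definition chi :: "real \<Rightarrow> ('s, 'a) lts \<Rightarrow> ('s, 'a) ta" where
  "chi M A = \<lparr> locs = states A, tinit = init A, tinputs = inputs A, toutputs = outputs A,
     invar = (\<lambda>_. CLe M),
     edges = {(l, Some a, CLt M, l') | l a l'. (l, a, l') \<in> trans A}
             \<union> {(l, None, CEq M, l) | l. l \<in> states A \<and> quiescent A l} \<rparr>"

definition tquiescent :: "real \<Rightarrow> ('l, 'a) ta \<Rightarrow> 'l \<Rightarrow> bool" where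
  "tquiescent M T l \<longleftrightarrow>
     \<not> (\<exists>d o' l'. 0 \<le> d \<and> d < M \<and> o' \<in> toutputs T \<and> tstep T l d (Some o') l')"

definition tout :: "real \<Rightarrow> ('l, 'a) ta \<Rightarrow> 'l \<Rightarrow> (real \<times> 'a option) set" where
  "tout M T l = {(d, Some o') | d o'. 0 \<le> d \<and> o' \<in> toutputs T \<and> (\<exists>l'. tstep T l d (Some o') l')}
               \<union> (if tquiescent M T l then {(M, None)} else {})"

definition tout_set :: "real \<Rightarrow> ('l, 'a) ta \<Rightarrow> 'l set \<Rightarrow> (real \<times> 'a option) set" where
  "tout_set M T P = (\<Union>l\<in>P. tout M T l)"

definition tlabels :: "('l, 'a) ta \<Rightarrow> 'a option set" where
  "tlabels T = Some ` (tinputs T \<union> toutputs T) \<union> {None}"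

definition tafter1 :: "real \<Rightarrow> ('l, 'a) ta \<Rightarrow> 'l \<Rightarrow> real \<times> 'a option \<Rightarrow> 'l set" where
  "tafter1 M T l da = {l'. tstep T l (fst da) (snd da) l'}
     \<union> (if da = (M, None) \<and> tquiescent M T l then {l} else {})"

fun tafter_s :: "real \<Rightarrow> ('l, 'a) ta \<Rightarrow> 'l \<Rightarrow> (real \<times> 'a option) list \<Rightarrow> 'l set" where
  "tafter_s M T l [] = {l}"
| "tafter_s M T l (da # \<rho>) = (\<Union>l'\<in>tafter1 M T l da. tafter_s M T l' \<rho>)"

definition tafter :: "real \<Rightarrow> ('l, 'a) ta \<Rightarrow> (real \<times> 'a option) list \<Rightarrow> 'l set" where
  "tafter M T \<rho> = tafter_s M T (tinit T) \<rho>"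

definition sttraces :: "real \<Rightarrow> ('l, 'a) ta \<Rightarrow> (real \<times> 'a option) list set" where
  "sttraces M T = {\<rho>. (\<forall>(d, a)\<in>set \<rho>. 0 \<le> d \<and> a \<in> tlabels T) \<and> tafter M T \<rho> \<noteq> {}}"

definition is_iota :: "real \<Rightarrow> ('l, 'a) ta \<Rightarrow> bool" where
  "is_iota M T \<longleftrightarrow> (\<forall>l\<in>locs T. \<forall>i\<in>tinputs T. \<forall>d. 0 \<le> d \<and> d < M \<longrightarrow> (\<exists>l'. tstep T l d (Some i) l'))"

definition tioco :: "real \<Rightarrow> ('l1, 'a) ta \<Rightarrow> ('l2, 'a) ta \<Rightarrow> bool" where
  "tioco M TI TS \<longleftrightarrow> (\<forall>\<rho>\<in>sttraces M TS.
     tout_set M TI (tafter M TI \<rho>) \<subseteq> tout_set M TS (tafter M TS \<rho>))"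

end

theory Submission
  imports Defs
begin

text \<open>The timed automaton \<open>chi M A\<close> is \<open>A\<close> with every action forced to happen strictly
  before the clock reaches \<open>M\<close> and quiescence observed exactly at \<open>M\<close>. Hence a timed
  label \<open>(d, a)\<close> can be taken in \<open>chi M A\<close> iff \<open>a\<close> can be taken in \<open>A\<close> and \<open>d\<close> is
  well timed; \<open>after\<close>, \<open>out\<close> and the suspension traces of \<open>chi M A\<close> are then those of
  \<open>A\<close> after forgetting the delays. Since \<open>M > 0\<close>, every untimed label admits a well-timed
  nonnegative delay, so the inclusions required by \<open>tioco\<close> and by \<open>ioco\<close> coincide.\<close>

fun well_timed :: "real \<Rightarrow> real \<times> 'a option \<Rightarrow> bool" where
  "well_timed M (d, None) \<longleftrightarrow> d = M"
| "well_timed M (d, Some _) \<longleftrightarrow> d < M"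

definition canonical_timing :: "real \<Rightarrow> 'a option list \<Rightarrow> (real \<times> 'a option) list" where
  "canonical_timing M \<sigma> = map (\<lambda>a. (if a = None then M else 0, a)) \<sigma>"

lemma map_snd_canonical_timing: "map snd (canonical_timing M \<sigma>) = \<sigma>"
  by (simp add: canonical_timing_def comp_def)

lemma canonical_timing_well_timed:
  assumes "M > 0"
  shows "\<forall>p\<in>set (canonical_timing M \<sigma>). 0 \<le> fst p \<and> well_timed M p"
  using assms by (auto simp: canonical_timing_def)

lemma toutputs_chi [simp]: "toutputs (chi M A) = outputs A"
  by (simp add: chi_def)

lemma tlabels_chi [simp]: "tlabels (chi M A) = act_delta A"
  by (simp add: tlabels_def act_delta_def chi_def)

lemma tstep_chi:
  "tstep (chi M A) l d a l' \<longleftrightarrow> (case a of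
       Some b \<Rightarrow> (l, b, l') \<in> trans A \<and> d < M
     | None \<Rightarrow> l' = l \<and> l \<in> states A \<and> quiescent A l \<and> d = M)"
  by (cases a) (auto simp: tstep_def chi_def)

lemma tquiescent_chi:
  assumes "M > 0"
  shows "tquiescent M (chi M A) l \<longleftrightarrow> quiescent A l"
  using assms unfolding tquiescent_def quiescent_def tstep_chi by auto

lemma tafter1_chi:
  assumes "M > 0" and "trans A \<subseteq> UNIV \<times> (inputs A \<union> outputs A) \<times> UNIV"
  shows "tafter1 M (chi M A) l (d, a) = (if well_timed M (d, a) then after1 A l a else {})"
  using assms
  by (cases a) (auto simp: tafter1_def after1_def tstep_chi tquiescent_chi)

lemma tafter_s_chi:
  assumes "M > 0" and "trans A \<subseteq> UNIV \<times> (inputs A \<union> outputs A) \<times> UNIV"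
  shows "tafter_s M (chi M A) l \<rho> =
    (if \<forall>p\<in>set \<rho>. well_timed M p then after_s A l (map snd \<rho>) else {})"
proof (induction \<rho> arbitrary: l)
  case Nil
  show ?case by simp
next
  case (Cons p \<rho>)
  obtain d a where "p = (d, a)" by fastforce
  with Cons.IH show ?case by (auto simp: tafter1_chi[OF assms])
qed

lemma tafter_chi:
  assumes "M > 0" and "trans A \<subseteq> UNIV \<times> (inputs A \<union> outputs A) \<times> UNIV"
  shows "tafter M (chi M A) \<rho> =
    (if \<forall>p\<in>set \<rho>. well_timed M p then after A (map snd \<rho>) else {})"
  using tafter_s_chi[OF assms] by (simp add: tafter_def after_def chi_def)

lemma tout_chi:
  assumes "M > 0"
  shows "(d, a) \<in> tout M (chi M A) l \<longleftrightarrow> well_timed M (d, a) \<and> 0 \<le> d \<and> a \<in> out A l"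
  using assms
  by (cases a) (auto simp: tout_def out_def tstep_chi tquiescent_chi)

lemma tout_set_chi:
  assumes "M > 0"
  shows "(d, a) \<in> tout_set M (chi M A) P \<longleftrightarrow> well_timed M (d, a) \<and> 0 \<le> d \<and> a \<in> out_set A P"
  by (simp add: tout_set_def out_set_def tout_chi[OF assms])

lemma tout_set_chi_subset_iff:
  assumes "M > 0"
  shows "tout_set M (chi M A) P \<subseteq> tout_set M (chi M B) Q \<longleftrightarrow> out_set A P \<subseteq> out_set B Q"
proof
  assume timed: "tout_set M (chi M A) P \<subseteq> tout_set M (chi M B) Q"
  show "out_set A P \<subseteq> out_set B Q"
  proof
    fix a
    assume "a \<in> out_set A P"
    moreover obtain d where "well_timed M (d, a)" and "0 \<le> d"
      using assms by (cases a) (auto intro: exI[of _ 0] exI[of _ M])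
    ultimately have "(d, a) \<in> tout_set M (chi M A) P"
      by (simp add: tout_set_chi[OF assms])
    with timed have "(d, a) \<in> tout_set M (chi M B) Q" ..
    then show "a \<in> out_set B Q"
      by (simp add: tout_set_chi[OF assms])
  qed
next
  assume "out_set A P \<subseteq> out_set B Q"
  then show "tout_set M (chi M A) P \<subseteq> tout_set M (chi M B) Q"
    by (auto simp: tout_set_chi[OF assms])
qed

lemma sttraces_chi:
  assumes "M > 0" and "trans A \<subseteq> UNIV \<times> (inputs A \<union> outputs A) \<times> UNIV"
  shows "\<rho> \<in> sttraces M (chi M A) \<longleftrightarrow>
    (\<forall>p\<in>set \<rho>. 0 \<le> fst p \<and> well_timed M p) \<and> map snd \<rho> \<in> straces A"
  by (auto simp: sttraces_def straces_def tafter_chi[OF assms] split: if_splits)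

lemma straces_eq_untimed_sttraces_chi:
  assumes "M > 0" and "trans A \<subseteq> UNIV \<times> (inputs A \<union> outputs A) \<times> UNIV"
  shows "straces A = map snd ` sttraces M (chi M A)"
proof
  show "straces A \<subseteq> map snd ` sttraces M (chi M A)"
  proof
    fix \<sigma>
    assume "\<sigma> \<in> straces A"
    then have "canonical_timing M \<sigma> \<in> sttraces M (chi M A)"
      using canonical_timing_well_timed[OF assms(1)]
      by (simp add: sttraces_chi[OF assms] map_snd_canonical_timing)
    then show "\<sigma> \<in> map snd ` sttraces M (chi M A)"
      by (metis image_eqI map_snd_canonical_timing)
  qed
qed (auto simp: sttraces_chi[OF assms])

lemma is_lts_trans_labels:
  "is_lts A \<Longrightarrow> trans A \<subseteq> UNIV \<times> (inputs A \<union> outputs A) \<times> UNIV"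
  unfolding is_lts_def by blast

theorem theorem1:
  fixes AI :: "('s1, 'a) lts" and AS :: "('s2, 'a) lts" and M :: real
  assumes "is_iots AI" and "is_lts AS"
    and "inputs AI = inputs AS" and "outputs AI = outputs AS"
    and "M > 0"
  shows "ioco AI AS \<longleftrightarrow> tioco M (chi M AI) (chi M AS)"
proof -
  have "is_lts AI"
    using assms(1) by (simp add: is_iots_def)
  note labels_I = is_lts_trans_labels[OF this]
  note labels_S = is_lts_trans_labels[OF assms(2)]
  have "tioco M (chi M AI) (chi M AS) \<longleftrightarrow> (\<forall>\<rho>\<in>sttraces M (chi M AS).
      out_set AI (after AI (map snd \<rho>)) \<subseteq> out_set AS (after AS (map snd \<rho>)))"
    by (auto simp: tioco_def sttraces_chi[OF assms(5) labels_S] tafter_chi[OF assms(5) labels_I]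
        tafter_chi[OF assms(5) labels_S] tout_set_chi_subset_iff[OF assms(5)])
  also have "\<dots> \<longleftrightarrow> ioco AI AS"
    by (simp add: ioco_def straces_eq_untimed_sttraces_chi[OF assms(5) labels_S])
  finally show ?thesis ..
qed

end
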